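(* Let $m\ge0$ and $n\ge0$ be integers. Then $r_n(q^{2m+1},q^2)$ is divisible by $(-q;q)_n$ and $r_n(-q^m,q)$ is divisible by $(q;q^2)_{\lfloor (n+1)/2\rfloor}$ in $\mathbb{Z}[q]$. More precisely, $$f(n,q^{2m+1},q)=\sum_{j=0}^m(-1)^jq^{j^2}\begin{bmatrix} m\\ j\end{bmatrix}_{q^2}(q^{n-j+1};q)_j\in\mathbb{Z}[q],$$ $$F(2n,q^m,q)=\sum_{k=0}^{\lfloor m/2\rfloor}q^{\binom{2k}{2}}\begin{bmatrix} m\\ 2k\end{bmatrix}_q(q^{2n-2k+2};q^2)_k\in\mathbb{Z}[q],$$ $$F(2n+1,q^m,q)=\sum_{k=0}^{\lfloor (m-1)/2\rfloor}q^{\binom{2k+1}{2}}\begin{bmatrix} m\\ 2k+1\end{bmatrix}_q(q^{2n-2k+2};q^2)_k\in\mathbb{Z}[q].$$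
   Context: $q$ is an indeterminate. $(x;q)_n=\prod_{j=0}^{n-1}(1-q^jx)$. The Gaussian binomial coefficient is $\begin{bmatrix} n\\ j\end{bmatrix}_q=\frac{(q;q)_n}{(q;q)_j(q;q)_{n-j}}$ for $0\le j\le n$ and $0$ otherwise. $r_n(s,q)=\sum_{j=0}^n\begin{bmatrix} n\\ j\end{bmatrix}_q s^j$ (Rogers–Szegö polynomials). The normalized Rogers–Szegö polynomials are $f(n,s,q)=\dfrac{\sum_{j=0}^n s^j\begin{bmatrix} n\\ j\end{bmatrix}_{q^2}}{(-q;q)_n}=\dfrac{r_n(s,q^2)}{(-q;q)_n}$ and $F(n,s,q)=\dfrac{\sum_{j=0}^n(-s)^j\begin{bmatrix} n\\ j\end{bmatrix}_{q}}{(q;q^2)_{\lfloor (n+1)/2\rfloor}}=\dfrac{r_n(-s,q)}{(q;q^2)_{\lfloor (n+1)/2\rfloor}}$. An empty sum is $0$. *)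

theory Defs
  imports "HOL-Computational_Algebra.Polynomial"
begin

definition qpoch :: "'a::comm_ring_1 \<Rightarrow> 'a \<Rightarrow> nat \<Rightarrow> 'a" where
  "qpoch x q n = (\<Prod>j<n. 1 - q ^ j * x)"

definition qbinom :: "'a::idom_divide \<Rightarrow> nat \<Rightarrow> nat \<Rightarrow> 'a" where
  "qbinom q n j = (if j \<le> n then qpoch q q n div (qpoch q q j * qpoch q q (n - j)) else 0)"

definition rs :: "nat \<Rightarrow> 'a::idom_divide \<Rightarrow> 'a \<Rightarrow> 'a" where
  "rs n s q = (\<Sum>j\<le>n. qbinom q n j * s ^ j)"

definition qX :: "int poly" where
  "qX = [:0, 1:]"

end

theory Submission
  imports Defs
begin

(* Iterating the scaling recurrence r_n(Qs,Q) = r_n(s,Q) - s (1 - Q^n) r_{n-1}(s,Q) m times, and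
   collecting terms with the dual q-Pascal rule, gives
     r_n(s Q^m, Q) = sum_j [m,j]_Q (-s)^j Q^(j choose 2) (Q^(n+1-j);Q)_j r_{n-j}(s,Q).
   For s = q, Q = q^2 and for s = -1, Q = q the remaining values of r have product forms,
   r_k(q,q^2) = (-q;q)_k, r_{2k}(-1,q) = (q;q^2)_k and r_{2k+1}(-1,q) = 0, by the three-term recurrence
   r_{n+2} = (1+s) r_{n+1} - s (1 - Q^(n+1)) r_n.  In the second case only the summands with j of the
   parity of n survive, and the Pochhammer symbols of every summand combine into a multiple of
   (-q;q)_n resp. (q;q^2)_{(n+1) div 2}. *)

lemma qpoch_0 [simp]: "qpoch x q 0 = 1"
  by (simp add: qpoch_def)

lemma qpoch_Suc: "qpoch x q (Suc n) = qpoch x q n * (1 - q ^ n * x)"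
  by (simp add: qpoch_def)

lemma qpoch_Suc_self: "qpoch q q (Suc n) = qpoch q q n * (1 - q ^ Suc n)"
  by (simp add: qpoch_Suc mult.commute)

lemma qpoch_add: "qpoch x q (a + b) = qpoch x q a * qpoch (q ^ a * x) q b"
  by (induction b) (simp_all add: qpoch_Suc power_add mult_ac)

lemma qpoch_1_eq_0: "0 < k \<Longrightarrow> qpoch 1 q k = 0"
  using qpoch_add[of 1 q 1 "k - 1"] by (simp add: qpoch_Suc)

lemma qpoch_double_length: "qpoch x q (2 * k) = qpoch x (q ^ 2) k * qpoch (q * x) (q ^ 2) k"
proof (induction k)
  case (Suc k)
  have "qpoch x q (2 * Suc k) = qpoch x q (2 * k) * (1 - (q ^ 2) ^ k * x) * (1 - (q ^ 2) ^ k * (q * x))"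
    by (simp add: qpoch_Suc power_mult[symmetric] mult_ac)
  then show ?case
    using Suc by (simp add: qpoch_Suc mult_ac)
qed simp

lemma qpoch_square: "qpoch (x ^ 2) (q ^ 2) k = qpoch x q k * qpoch (- x) q k"
proof (induction k)
  case (Suc k)
  have "(q ^ 2) ^ k * x ^ 2 = (q ^ k * x) ^ 2"
    by (simp add: power_mult_distrib mult.commute flip: power_mult)
  then have "1 - (q ^ 2) ^ k * x ^ 2 = (1 - q ^ k * x) * (1 - q ^ k * - x)"
    by (simp add: power2_eq_square algebra_simps)
  then show ?case
    using Suc by (simp add: qpoch_Suc)
qed simp

lemma qpoch_square_power_split:
  "qpoch ((q ^ 2) ^ (n + 1 - j)) (q ^ 2) j * qpoch (- q) q (n - j)
     = qpoch (- q) q n * qpoch (q ^ (n + 1 - j)) q j"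
proof (cases "j \<le> n")
  case True
  then obtain a where n: "n = a + j"
    using le_Suc_ex by (metis add.commute)
  have "qpoch (- q) q n = qpoch (- q) q a * qpoch (- (q ^ Suc a)) q j"
    using qpoch_add[of "- q" q a j] n by (simp add: mult.commute)
  moreover have "(q ^ 2) ^ Suc a = (q ^ Suc a) ^ 2"
    by (metis power_mult mult.commute)
  ultimately show ?thesis
    using n by (simp add: qpoch_square mult_ac)
qed (simp add: qpoch_1_eq_0)

lemma qpoch_odd_power_double_length:
  "qpoch (q ^ (2 * a + 1)) q (2 * k) * qpoch q (q ^ 2) a
     = qpoch q (q ^ 2) (a + k) * qpoch (q ^ (2 * a + 2)) (q ^ 2) k"
proof -
  have odd_power: "q ^ (2 * a + 1) = (q ^ 2) ^ a * q"
    by (metis power_mult power_Suc2 Suc_eq_plus1)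
  have "qpoch (q ^ (2 * a + 1)) q (2 * k)
      = qpoch (q ^ (2 * a + 1)) (q ^ 2) k * qpoch (q ^ (2 * a + 2)) (q ^ 2) k"
    using qpoch_double_length[of "q ^ (2 * a + 1)" q k] by simp
  moreover have "qpoch q (q ^ 2) (a + k) = qpoch q (q ^ 2) a * qpoch (q ^ (2 * a + 1)) (q ^ 2) k"
    unfolding odd_power by (rule qpoch_add)
  ultimately show ?thesis
    by (simp only: mult_ac)
qed

(* The truncated differences match the index n + 1 - j of rogers_szego_mult_power;
   for n \<le> i both sides vanish. *)
lemma qpoch_power_diff_Suc:
  "qpoch (Q ^ (n + 1 - Suc i)) Q (Suc i) = (1 - Q ^ n) * qpoch (Q ^ (n - 1 + 1 - i)) Q i"
proof (cases "i < n")
  case True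
  then have "n + 1 - Suc i = n - i" "n - 1 + 1 - i = n - i" "Q ^ i * Q ^ (n - i) = Q ^ n"
    by (simp_all flip: power_add)
  then show ?thesis
    by (simp add: qpoch_Suc mult.commute)
next
  case False
  then have "n + 1 - Suc i = 0" "n = 0 \<or> 0 < i \<and> n - 1 + 1 - i = 0"
    by auto
  then show ?thesis
    by (auto simp: qpoch_1_eq_0)
qed

lemma power_choose_two:
  fixes x :: "'a::monoid_mult"
  shows "x ^ j * (x ^ 2) ^ (j choose 2) = x ^ (j ^ 2)"
proof -
  have "Suc i choose 2 = i + (i choose 2)" for i
    by (simp add: numeral_2_eq_2)
  then have "j + 2 * (j choose 2) = j ^ 2"
    by (induction j) (simp_all add: power2_eq_square)
  then show ?thesis
    unfolding power_mult[symmetric] power_add[symmetric] by simp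
qed

lemma sum_atMost_even_odd:
  fixes f :: "nat \<Rightarrow> 'a::comm_monoid_add"
  shows "(\<Sum>j\<le>m. f j) = (\<Sum>k\<le>m div 2. f (2 * k)) + (\<Sum>k<(m + 1) div 2. f (2 * k + 1))"
proof -
  have "(\<Sum>j\<le>2 * M. f j) = (\<Sum>k\<le>M. f (2 * k)) + (\<Sum>k<M. f (2 * k + 1)) \<and>
        (\<Sum>j\<le>2 * M + 1. f j) = (\<Sum>k\<le>M. f (2 * k)) + (\<Sum>k<M + 1. f (2 * k + 1))" for M :: nat
  proof (induction M)
    case (Suc M)
    have "2 * Suc M = Suc (2 * M + 1)" "2 * Suc M + 1 = Suc (Suc (2 * M + 1))"
      by simp_all
    then show ?case
      using Suc by (simp add: algebra_simps)
  qed simp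
  moreover obtain M where "m = 2 * M \<or> m = 2 * M + 1"
    by (metis oddE evenE)
  ultimately show ?thesis
    by (auto simp: add.assoc)
qed

(* A division-free version of qbinom, meaningful in any commutative ring. *)
fun gauss_binom :: "'a::comm_ring_1 \<Rightarrow> nat \<Rightarrow> nat \<Rightarrow> 'a" where
  "gauss_binom Q 0 0 = 1"
| "gauss_binom Q 0 (Suc k) = 0"
| "gauss_binom Q (Suc n) 0 = 1"
| "gauss_binom Q (Suc n) (Suc k) = gauss_binom Q n k + Q ^ Suc k * gauss_binom Q n (Suc k)"

lemma gauss_binom_eq_0: "n < k \<Longrightarrow> gauss_binom Q n k = 0"
  by (induction Q n k rule: gauss_binom.induct) auto

lemma gauss_binom_0_right [simp]: "gauss_binom Q n 0 = 1"
  by (cases n) auto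

lemma gauss_binom_qpoch:
  "k \<le> n \<Longrightarrow> gauss_binom Q n k * qpoch Q Q k * qpoch Q Q (n - k) = qpoch Q Q n"
proof (induction n arbitrary: k)
  case (Suc n)
  show ?case
  proof (cases "k = Suc n")
    case True
    then show ?thesis
      using Suc.IH[of n] by (simp add: gauss_binom_eq_0 qpoch_Suc_self mult.assoc[symmetric])
  next
    case False
    show ?thesis
    proof (cases k)
      case (Suc i)
      with Suc.prems False obtain a where n: "n = Suc (i + a)"
        by (metis Suc_le_mono le_neq_implies_less less_imp_Suc_add)
      have "gauss_binom Q (Suc n) (Suc i) * qpoch Q Q (Suc i) * qpoch Q Q (Suc a)
          = (1 - Q ^ Suc i) * (gauss_binom Q n i * qpoch Q Q i * qpoch Q Q (n - i))
            + Q ^ Suc i * (1 - Q ^ Suc a) * (gauss_binom Q n (Suc i) * qpoch Q Q (Suc i) * qpoch Q Q (n - Suc i))"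
        using n by (simp add: qpoch_Suc_self algebra_simps del: power_Suc)
      also have "\<dots> = qpoch Q Q n * (1 - Q ^ Suc i * Q ^ Suc a)"
        using Suc.IH[of i] Suc.IH[of "Suc i"] n by (simp add: algebra_simps del: power_Suc)
      also have "\<dots> = qpoch Q Q (Suc n)"
        using n by (simp add: qpoch_Suc_self power_add[symmetric] del: power_Suc)
      finally show ?thesis
        using n \<open>k = Suc i\<close> by simp
    qed simp
  qed
qed simp

definition rogers_szego :: "nat \<Rightarrow> 'a::comm_ring_1 \<Rightarrow> 'a \<Rightarrow> 'a" where
  "rogers_szego n s Q = (\<Sum>j\<le>n. gauss_binom Q n j * s ^ j)"

lemma rogers_szego_0 [simp]: "rogers_szego 0 s Q = 1"
  by (simp add: rogers_szego_def)

lemma rogers_szego_Suc: "rogers_szego (Suc n) s Q = s * rogers_szego n s Q + rogers_szego n (Q * s) Q"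
proof -
  have "rogers_szego n (Q * s) Q = (\<Sum>j\<le>Suc n. gauss_binom Q n j * (Q * s) ^ j)"
    unfolding rogers_szego_def by (simp add: gauss_binom_eq_0)
  then show ?thesis
    unfolding rogers_szego_def sum.atMost_Suc_shift[of _ n]
    by (simp add: sum.distrib sum_distrib_left algebra_simps power_mult_distrib)
qed

context
  fixes Q :: "'a::idom"
  assumes qpoch_ne_0: "\<And>k. qpoch Q Q k \<noteq> 0"
begin

lemma gauss_binom_absorb:
  "gauss_binom Q (Suc n) (Suc k) * (1 - Q ^ Suc k) = (1 - Q ^ Suc n) * gauss_binom Q n k"
proof (cases "k \<le> n")
  case True
  define c where "c = qpoch Q Q k * qpoch Q Q (n - k)"
  have "gauss_binom Q (Suc n) (Suc k) * (1 - Q ^ Suc k) * c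
      = gauss_binom Q (Suc n) (Suc k) * qpoch Q Q (Suc k) * qpoch Q Q (Suc n - Suc k)"
    unfolding c_def by (simp add: qpoch_Suc mult_ac)
  also have "\<dots> = (1 - Q ^ Suc n) * gauss_binom Q n k * c"
    using gauss_binom_qpoch[of k n Q] gauss_binom_qpoch[of "Suc k" "Suc n" Q] True
    unfolding c_def by (simp add: qpoch_Suc mult_ac)
  finally show ?thesis
    using qpoch_ne_0 unfolding c_def by simp
qed (simp add: gauss_binom_eq_0)

lemma gauss_binom_Suc_Suc':
  assumes "k \<le> n"
  shows "gauss_binom Q (Suc n) (Suc k) = gauss_binom Q n (Suc k) + Q ^ (n - k) * gauss_binom Q n k"
proof (cases "k = n")
  case False
  with assms obtain a where n: "n = Suc (k + a)"
    by (metis le_neq_implies_less less_imp_Suc_add)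
  define c where "c = qpoch Q Q (Suc k) * qpoch Q Q (Suc a)"
  have "(gauss_binom Q n (Suc k) + Q ^ (n - k) * gauss_binom Q n k) * c
      = (1 - Q ^ Suc a) * (gauss_binom Q n (Suc k) * qpoch Q Q (Suc k) * qpoch Q Q (n - Suc k))
        + Q ^ Suc a * (1 - Q ^ Suc k) * (gauss_binom Q n k * qpoch Q Q k * qpoch Q Q (n - k))"
    using n unfolding c_def by (simp add: qpoch_Suc_self algebra_simps del: power_Suc)
  also have "\<dots> = qpoch Q Q n * (1 - Q ^ Suc k * Q ^ Suc a)"
    using gauss_binom_qpoch[of "Suc k" n Q] gauss_binom_qpoch[of k n Q] n
    by (simp add: algebra_simps del: power_Suc)
  also have "\<dots> = gauss_binom Q (Suc n) (Suc k) * c"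
    using gauss_binom_qpoch[of "Suc k" "Suc n" Q] n
    unfolding c_def by (simp add: qpoch_Suc_self power_add[symmetric] mult.assoc del: power_Suc)
  finally show ?thesis
    using qpoch_ne_0 unfolding c_def by simp
qed (simp add: gauss_binom_eq_0)

lemma sum_gauss_binom_Suc:
  "(\<Sum>j\<le>Suc m. gauss_binom Q (Suc m) j * f j)
     = (\<Sum>j\<le>m. gauss_binom Q m j * f j) + (\<Sum>j\<le>m. Q ^ (m - j) * gauss_binom Q m j * f (Suc j))"
proof -
  have "(\<Sum>j\<le>m. gauss_binom Q (Suc m) (Suc j) * f (Suc j))
      = (\<Sum>j\<le>m. gauss_binom Q m (Suc j) * f (Suc j)) + (\<Sum>j\<le>m. Q ^ (m - j) * gauss_binom Q m j * f (Suc j))"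
    by (simp add: gauss_binom_Suc_Suc' distrib_right sum.distrib del: gauss_binom.simps)
  moreover have "(\<Sum>j\<le>Suc m. gauss_binom Q m j * f j) = (\<Sum>j\<le>m. gauss_binom Q m j * f j)"
    by (simp add: gauss_binom_eq_0)
  ultimately show ?thesis
    unfolding sum.atMost_Suc_shift[of _ m] by (simp del: gauss_binom.simps)
qed

lemma rogers_szego_scale:
  "rogers_szego n (Q * s) Q = rogers_szego n s Q - s * (1 - Q ^ n) * rogers_szego (n - 1) s Q"
proof (cases n)
  case (Suc n)
  have "gauss_binom Q (Suc n) (Suc j) * (s ^ Suc j - (Q * s) ^ Suc j)
      = s * (1 - Q ^ Suc n) * (gauss_binom Q n j * s ^ j)" for j
  proof -
    have "gauss_binom Q (Suc n) (Suc j) * (s ^ Suc j - (Q * s) ^ Suc j)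
        = s ^ Suc j * (gauss_binom Q (Suc n) (Suc j) * (1 - Q ^ Suc j))"
      by (simp add: algebra_simps power_mult_distrib del: power_Suc gauss_binom.simps)
    then show ?thesis
      unfolding gauss_binom_absorb by (simp add: algebra_simps)
  qed
  then have "rogers_szego (Suc n) s Q - rogers_szego (Suc n) (Q * s) Q
      = (\<Sum>j\<le>n. s * (1 - Q ^ Suc n) * (gauss_binom Q n j * s ^ j))"
    unfolding rogers_szego_def sum_subtractf[symmetric] right_diff_distrib[symmetric]
    by (simp only: sum.atMost_Suc_shift) (simp del: gauss_binom.simps power_Suc)
  also have "\<dots> = s * (1 - Q ^ Suc n) * rogers_szego n s Q"
    unfolding rogers_szego_def by (simp add: sum_distrib_left)
  finally show ?thesis
    using Suc by (simp add: algebra_simps)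
qed simp

lemma rogers_szego_Suc_Suc:
  "rogers_szego (Suc (Suc n)) s Q = (1 + s) * rogers_szego (Suc n) s Q - s * (1 - Q ^ Suc n) * rogers_szego n s Q"
  using rogers_szego_Suc[of "Suc n" s Q] rogers_szego_scale[of "Suc n" s] by (simp add: algebra_simps)

lemma rogers_szego_mult_power:
  "rogers_szego n (s * Q ^ m) Q = (\<Sum>j\<le>m. gauss_binom Q m j *
     ((-1) ^ j * s ^ j * Q ^ (j choose 2) * qpoch (Q ^ (n + 1 - j)) Q j * rogers_szego (n - j) s Q))"
proof -
  define t where "t n j = (-1) ^ j * s ^ j * Q ^ (j choose 2) * qpoch (Q ^ (n + 1 - j)) Q j * rogers_szego (n - j) s Q"
    for n j
  have t_Suc: "t n (Suc j) = - (s * Q ^ j * (1 - Q ^ n) * t (n - 1) j)" for n j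
  proof -
    have "Q ^ (Suc j choose 2) = Q ^ j * Q ^ (j choose 2)"
      by (simp add: numeral_2_eq_2 power_add)
    moreover have "n - Suc j = n - 1 - j"
      by simp
    ultimately show ?thesis
      unfolding t_def qpoch_power_diff_Suc by (simp add: algebra_simps)
  qed
  have "rogers_szego n (s * Q ^ m) Q = (\<Sum>j\<le>m. gauss_binom Q m j * t n j)"
  proof (induction m arbitrary: n)
    case 0
    show ?case by (simp add: t_def numeral_2_eq_2)
  next
    case (Suc m)
    have "(\<Sum>j\<le>m. Q ^ (m - j) * gauss_binom Q m j * t n (Suc j))
        = - (s * Q ^ m * (1 - Q ^ n) * (\<Sum>j\<le>m. gauss_binom Q m j * t (n - 1) j))"
      unfolding t_Suc sum_distrib_left sum_negf[symmetric]
    proof (rule sum.cong[OF refl])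
      fix j
      assume "j \<in> {..m}"
      then have "Q ^ m = Q ^ (m - j) * Q ^ j"
        by (simp flip: power_add)
      then show "Q ^ (m - j) * gauss_binom Q m j * - (s * Q ^ j * (1 - Q ^ n) * t (n - 1) j)
          = - (s * Q ^ m * (1 - Q ^ n) * (gauss_binom Q m j * t (n - 1) j))"
        by (simp add: algebra_simps)
    qed
    then have "(\<Sum>j\<le>Suc m. gauss_binom Q (Suc m) j * t n j)
        = rogers_szego n (s * Q ^ m) Q - s * Q ^ m * (1 - Q ^ n) * rogers_szego (n - 1) (s * Q ^ m) Q"
      unfolding sum_gauss_binom_Suc Suc.IH by simp
    also have "\<dots> = rogers_szego n (s * Q ^ Suc m) Q"
      using rogers_szego_scale[of n "s * Q ^ m"] by (simp add: mult_ac)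
    finally show ?case ..
  qed
  then show ?thesis
    unfolding t_def .
qed

lemma rogers_szego_minus_one_Suc_Suc:
  "rogers_szego (Suc (Suc n)) (- 1) Q = (1 - Q ^ Suc n) * rogers_szego n (- 1) Q"
  using rogers_szego_Suc_Suc[of n "- 1"] by (simp add: algebra_simps)

lemma rogers_szego_minus_one_odd: "rogers_szego (2 * n + 1) (- 1) Q = 0"
proof (induction n)
  case 0
  then show ?case by (simp add: rogers_szego_def)
next
  case (Suc n)
  then show ?case
    using rogers_szego_minus_one_Suc_Suc[of "2 * n + 1"] by simp
qed

lemma rogers_szego_minus_one_even: "rogers_szego (2 * n) (- 1) Q = qpoch Q (Q ^ 2) n"
proof (induction n)
  case (Suc n)
  then show ?case
    using rogers_szego_minus_one_Suc_Suc[of "2 * n"]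
    by (simp add: qpoch_Suc mult.commute power_mult[symmetric])
qed simp

end

lemma rogers_szego_square_base:
  fixes q :: "'a::idom"
  assumes "\<And>k. qpoch (q ^ 2) (q ^ 2) k \<noteq> 0"
  shows "rogers_szego n q (q ^ 2) = qpoch (- q) q n"
proof (induction n rule: induct_nat_012)
  case 0
  then show ?case by simp
next
  case 1
  then show ?case by (simp add: rogers_szego_def qpoch_Suc)
next
  case (ge2 n)
  define x where "x = q ^ Suc n"
  have "rogers_szego (Suc (Suc n)) q (q ^ 2)
      = (1 + q) * (qpoch (- q) q n * (1 + x)) - q * (1 - x * x) * qpoch (- q) q n"
    using rogers_szego_Suc_Suc[OF assms, of n q] ge2
    by (simp add: qpoch_Suc x_def power_mult_distrib[symmetric] power2_eq_square mult.commute
        flip: power_mult)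
  also have "\<dots> = qpoch (- q) q n * (1 + x) * (1 + q * x)"
    by (simp add: algebra_simps)
  also have "\<dots> = qpoch (- q) q (Suc (Suc n))"
    by (simp add: qpoch_Suc x_def mult.commute)
  finally show ?case .
qed

lemma qbinom_eq_gauss_binom:
  fixes Q :: "'a::idom_divide"
  assumes "\<And>k. qpoch Q Q k \<noteq> 0"
  shows "qbinom Q n j = gauss_binom Q n j"
proof (cases "j \<le> n")
  case True
  have "qpoch Q Q n = gauss_binom Q n j * (qpoch Q Q j * qpoch Q Q (n - j))"
    using gauss_binom_qpoch[OF True, of Q] by (simp add: mult.assoc)
  then show ?thesis
    using True assms by (simp add: qbinom_def)
qed (simp add: qbinom_def gauss_binom_eq_0)

lemma rs_eq_rogers_szego:
  fixes Q :: "'a::idom_divide"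
  assumes "\<And>k. qpoch Q Q k \<noteq> 0"
  shows "rs n s Q = rogers_szego n s Q"
  unfolding rs_def rogers_szego_def qbinom_eq_gauss_binom[OF assms] ..

lemma rs_odd_power_square_base:
  fixes q :: "'a::idom_divide"
  assumes qpoch_ne_0: "\<And>k. qpoch (q ^ 2) (q ^ 2) k \<noteq> 0"
  shows "rs n (q ^ (2 * m + 1)) (q ^ 2) = qpoch (- q) q n *
    (\<Sum>j\<le>m. (-1) ^ j * q ^ (j ^ 2) * qbinom (q ^ 2) m j * qpoch (q ^ (n + 1 - j)) q j)"
proof -
  have summand: "gauss_binom (q ^ 2) m j * ((-1) ^ j * q ^ j * (q ^ 2) ^ (j choose 2)
        * qpoch ((q ^ 2) ^ (n + 1 - j)) (q ^ 2) j * rogers_szego (n - j) q (q ^ 2))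
      = qpoch (- q) q n * ((-1) ^ j * q ^ (j ^ 2) * qbinom (q ^ 2) m j * qpoch (q ^ (n + 1 - j)) q j)" for j
  proof -
    have "gauss_binom (q ^ 2) m j * ((-1) ^ j * q ^ j * (q ^ 2) ^ (j choose 2)
          * qpoch ((q ^ 2) ^ (n + 1 - j)) (q ^ 2) j * rogers_szego (n - j) q (q ^ 2))
        = (-1) ^ j * (q ^ j * (q ^ 2) ^ (j choose 2)) * gauss_binom (q ^ 2) m j
          * (qpoch ((q ^ 2) ^ (n + 1 - j)) (q ^ 2) j * qpoch (- q) q (n - j))"
      unfolding rogers_szego_square_base[OF qpoch_ne_0] by (simp only: mult_ac)
    then show ?thesis
      unfolding qpoch_square_power_split power_choose_two qbinom_eq_gauss_binom[OF qpoch_ne_0]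
      by (simp only: mult_ac)
  qed
  have odd_power: "q ^ (2 * m + 1) = q * (q ^ 2) ^ m"
    by (metis power_mult power_Suc Suc_eq_plus1)
  show ?thesis
    unfolding rs_eq_rogers_szego[OF qpoch_ne_0] odd_power rogers_szego_mult_power[OF qpoch_ne_0] summand
    by (simp only: sum_distrib_left)
qed

context
  fixes q :: "'a::idom_divide"
  assumes qpoch_ne_0: "\<And>k. qpoch q q k \<noteq> 0"
begin

lemma rs_minus_power:
  "rs N (- (q ^ m)) q = (\<Sum>j\<le>m. gauss_binom q m j *
     (q ^ (j choose 2) * qpoch (q ^ (N + 1 - j)) q j * rogers_szego (N - j) (- 1) q))"
proof -
  have "(- 1 :: 'a) ^ j * (- 1) ^ j = 1" for j
    by (simp flip: power_mult_distrib)
  then show ?thesis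
    using rogers_szego_mult_power[OF qpoch_ne_0, of N "- 1" m]
    by (simp add: rs_eq_rogers_szego[OF qpoch_ne_0] mult.assoc)
qed

lemma rs_minus_power_even:
  "rs (2 * n) (- (q ^ m)) q = qpoch q (q ^ 2) n *
     (\<Sum>k\<le>m div 2. q ^ ((2 * k) choose 2) * qbinom q m (2 * k) * qpoch (q ^ (2 * n + 2 - 2 * k)) (q ^ 2) k)"
proof -
  define t where "t j = gauss_binom q m j *
    (q ^ (j choose 2) * qpoch (q ^ (2 * n + 1 - j)) q j * rogers_szego (2 * n - j) (- 1) q)" for j
  have "t (2 * k + 1) = 0" for k
  proof (cases "k < n")
    case True
    then have "2 * n - (2 * k + 1) = 2 * (n - k - 1) + 1"
      by simp
    then show ?thesis
      unfolding t_def by (simp only: rogers_szego_minus_one_odd[OF qpoch_ne_0] mult_zero_right)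
  qed (simp add: t_def qpoch_1_eq_0)
  moreover have "t (2 * k) = qpoch q (q ^ 2) n *
      (q ^ ((2 * k) choose 2) * qbinom q m (2 * k) * qpoch (q ^ (2 * n + 2 - 2 * k)) (q ^ 2) k)" for k
  proof (cases "k \<le> n")
    case True
    define a where "a = n - k"
    have n: "n = a + k" "2 * n + 1 - 2 * k = 2 * a + 1" "2 * n + 2 - 2 * k = 2 * a + 2" "2 * n - 2 * k = 2 * a"
      using True unfolding a_def by auto
    have "t (2 * k) = gauss_binom q m (2 * k) * q ^ ((2 * k) choose 2)
        * (qpoch (q ^ (2 * a + 1)) q (2 * k) * qpoch q (q ^ 2) a)"
      unfolding t_def n(2,4) rogers_szego_minus_one_even[OF qpoch_ne_0] by (simp only: mult_ac)
    then show ?thesis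
      unfolding qpoch_odd_power_double_length n(3) n(1)[symmetric] qbinom_eq_gauss_binom[OF qpoch_ne_0]
      by (simp only: mult_ac)
  qed (simp add: t_def qpoch_1_eq_0)
  ultimately show ?thesis
    unfolding rs_minus_power t_def[symmetric] sum_atMost_even_odd[of t m]
    by (simp add: sum_distrib_left)
qed

lemma rs_minus_power_odd:
  "rs (2 * n + 1) (- (q ^ m)) q = qpoch q (q ^ 2) (n + 1) *
     (\<Sum>k<(m + 1) div 2. q ^ ((2 * k + 1) choose 2) * qbinom q m (2 * k + 1) * qpoch (q ^ (2 * n + 2 - 2 * k)) (q ^ 2) k)"
proof -
  define t where "t j = gauss_binom q m j *
    (q ^ (j choose 2) * qpoch (q ^ (2 * n + 1 + 1 - j)) q j * rogers_szego (2 * n + 1 - j) (- 1) q)" for j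
  have "t (2 * k) = 0" for k
  proof (cases "k \<le> n")
    case True
    then have "2 * n + 1 - 2 * k = 2 * (n - k) + 1"
      by simp
    then show ?thesis
      unfolding t_def by (simp only: rogers_szego_minus_one_odd[OF qpoch_ne_0] mult_zero_right)
  qed (simp add: t_def qpoch_1_eq_0)
  moreover have "t (2 * k + 1) = qpoch q (q ^ 2) (n + 1) *
      (q ^ ((2 * k + 1) choose 2) * qbinom q m (2 * k + 1) * qpoch (q ^ (2 * n + 2 - 2 * k)) (q ^ 2) k)" for k
  proof (cases "k \<le> n")
    case True
    define a where "a = n - k"
    have n: "n + 1 = Suc (a + k)" "2 * n + 1 + 1 - (2 * k + 1) = 2 * a + 1" "2 * n + 2 - 2 * k = 2 * a + 2"
      "2 * n + 1 - (2 * k + 1) = 2 * a"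
      using True unfolding a_def by auto
    have last_factor: "q ^ (2 * k) * q ^ (2 * a + 1) = (q ^ 2) ^ (a + k) * q"
      by (simp add: power_add power_mult[symmetric] mult_ac)
    have "t (2 * k + 1) = gauss_binom q m (2 * k + 1) * q ^ ((2 * k + 1) choose 2)
        * (qpoch (q ^ (2 * a + 1)) q (2 * k) * qpoch q (q ^ 2) a) * (1 - q ^ (2 * k) * q ^ (2 * a + 1))"
      unfolding t_def n(2,4) rogers_szego_minus_one_even[OF qpoch_ne_0] qpoch_Suc[of _ _ "2 * k", unfolded Suc_eq_plus1]
      by (simp only: mult_ac)
    then show ?thesis
      unfolding qpoch_odd_power_double_length last_factor n(3) n(1) qpoch_Suc qbinom_eq_gauss_binom[OF qpoch_ne_0]
      by (simp only: mult_ac)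
  qed (simp add: t_def qpoch_1_eq_0)
  ultimately show ?thesis
    unfolding rs_minus_power t_def[symmetric] sum_atMost_even_odd[of t m]
    by (simp add: sum_distrib_left)
qed

end

lemma qpoch_qX_power_ne_0:
  assumes "0 < e"
  shows "qpoch (qX ^ e) (qX ^ e) k \<noteq> 0"
proof -
  have "poly (qpoch (qX ^ e) (qX ^ e) k) 2 = (\<Prod>j<k. 1 - 2 ^ (e * Suc j))"
    by (simp add: qpoch_def qX_def poly_prod power_mult[symmetric] power_add[symmetric] mult.commute)
  then have "poly (qpoch (qX ^ e) (qX ^ e) k) 2 \<noteq> 0"
    using assms by simp
  then show ?thesis
    by auto
qed

theorem corollary2p1:
  fixes m n :: nat
  shows "qpoch (- qX) qX n dvd rs n (qX ^ (2*m+1)) (qX ^ 2) \<and>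
      qpoch qX (qX ^ 2) ((n + 1) div 2) dvd rs n (- (qX ^ m)) qX \<and>
      rs n (qX ^ (2*m+1)) (qX ^ 2) = qpoch (- qX) qX n *
           (\<Sum>j\<le>m. (-1) ^ j * qX ^ (j^2) * qbinom (qX ^ 2) m j * qpoch (qX ^ (n + 1 - j)) qX j) \<and>
      rs (2*n) (- (qX ^ m)) qX = qpoch qX (qX ^ 2) n *
           (\<Sum>k\<le>m div 2. qX ^ ((2*k) choose 2) * qbinom qX m (2*k) * qpoch (qX ^ (2*n + 2 - 2*k)) (qX ^ 2) k) \<and>
      rs (2*n+1) (- (qX ^ m)) qX = qpoch qX (qX ^ 2) (n + 1) *
           (\<Sum>k<(m + 1) div 2. qX ^ ((2*k+1) choose 2) * qbinom qX m (2*k+1) * qpoch (qX ^ (2*n + 2 - 2*k)) (qX ^ 2) k)"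
proof -
  have qpoch_ne_0: "qpoch qX qX k \<noteq> 0" for k
    using qpoch_qX_power_ne_0[of 1 k] by simp
  have qpoch_square_ne_0: "qpoch (qX ^ 2) (qX ^ 2) k \<noteq> 0" for k
    by (rule qpoch_qX_power_ne_0) simp
  note rs_even = rs_minus_power_even[OF qpoch_ne_0] and rs_odd = rs_minus_power_odd[OF qpoch_ne_0]
  have "qpoch qX (qX ^ 2) ((n + 1) div 2) dvd rs n (- (qX ^ m)) qX"
  proof (cases "even n")
    case True
    then obtain k where "n = 2 * k" ..
    then show ?thesis
      using rs_even[of k m] by simp
  next
    case False
    then obtain k where "n = 2 * k + 1" ..
    then show ?thesis
      using rs_odd[of k m] by simp
  qed
  then show ?thesis
    using rs_odd_power_square_base[OF qpoch_square_ne_0] rs_even rs_odd by simp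
qed

end
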